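(* Let $t\mapsto\zeta(t)=(\xi(t),\eta(t))$, $t\in I$, be a solution of the unperturbed system $(\mathrm P_0)$ such that $\epsilon(t)\neq0$, $n^j(t)\neq0$ and $V^j(t)\neq0$ for all $j\in\{1,\dots,S\}$ and all $t\in I$. Then the Jacobian $D_\eta g_0(\zeta(t))$ is singular for every $t\in I$.
   Context: Fix integers $S\ge 2$, $C\ge 2$ and an interval $I\subset\mathbb R$. Given are continuously differentiable real functions $f_{\mathrm{vle},i}(P,T,\mathbf x)$ ($i=1,\dots,C$), $f_{\mathrm{hl}}(T,\mathbf x)$, $f_{\mathrm{hv}}(T,\mathbf y)$, $f_{\mathrm{holdup}}(L)$. Controls are continuously differentiable real functions $\epsilon,P,Q,T^{\mathrm{cond}}$ on $I$. State variables: $n^j,H^j,T^j,V^j$, $\mathbf x^j,\mathbf y^j\in\mathbb R^C$ ($j=1,\dots,S$), $L^j$ ($j=1,\dots,S-1$); a solution is a tuple of continuously differentiable state functions satisfying all equations at every $t\in I$. "$2\le j\le S-1$" marks middle-stage equations. The system $(\mathrm P_0)$ consists of: (TM) $\dot n^1=L^1-V^1$; $\dot n^j=L^j-V^j-L^{j-1}+V^{j-1}$ ($2\le j\le S-1$); $\dot n^S=-\epsilon V^S-L^{S-1}+V^{S-1}$; (CM$_0$) for $i=1,\dots,C-1$: $\dot x_i^1=\big(L^1(x_i^2-x_i^1)-V^1(y_i^1-x_i^1)\big)/n^1$; $\dot x_i^j=\big(L^j(x_i^{j+1}-x_i^j)-V^j(y_i^j-x_i^j)+V^{j-1}(y_i^{j-1}-x_i^j)\big)/n^j$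 ($2\le j\le S-1$); $\dot x_i^S=\big(\epsilon V^S(x_i^S-y_i^S)+V^{S-1}(y_i^{S-1}-x_i^S)\big)/n^S$; (EB) $\dot H^1=L^1f_{\mathrm{hl}}(T^2,\mathbf x^2)-V^1f_{\mathrm{hv}}(T^1,\mathbf y^1)+Q$; $\dot H^j=L^jf_{\mathrm{hl}}(T^{j+1},\mathbf x^{j+1})-V^jf_{\mathrm{hv}}(T^j,\mathbf y^j)-L^{j-1}f_{\mathrm{hl}}(T^j,\mathbf x^j)+V^{j-1}f_{\mathrm{hv}}(T^{j-1},\mathbf y^{j-1})$ ($2\le j\le S-1$); $\dot H^S=(1-\epsilon)V^Sf_{\mathrm{hl}}(T^{\mathrm{cond}},\mathbf y^S)-V^Sf_{\mathrm{hv}}(T^S,\mathbf y^S)-L^{S-1}f_{\mathrm{hl}}(T^S,\mathbf x^S)+V^{S-1}f_{\mathrm{hv}}(T^{S-1},\mathbf y^{S-1})$; and the algebraic equations $g_0=0$, where, with $\delta_i^j:=0$: $\mathrm{aux}^1_\delta=\sum_{i=1}^C\big(L^1(x_i^2-x_i^1-\delta_i^1)-V^1(y_i^1-x_i^1-\delta_i^1)\big)/n^1$; for $2\le j\le S-1$, $\mathrm{aux}^j_\delta=\sum_{i=1}^C\big(L^j(x_i^{j+1}-x_i^j-\delta_i^j)-V^j(y_i^j-x_i^j-\delta_i^j)+V^{j-1}(y_i^{j-1}-x_i^j-\delta_i^j)\big)/n^j$; $\mathrm{aux}^S_\delta=\sum_{i=1}^C\big(\epsilon V^S(x_i^S+\delta_i^S-y_i^S)+V^{S-1}(y_i^{S-1}-x_i^S-\delta_i^S)\big)/n^S$;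 $\mathrm{ydef}_i^j=y_i^j-f_{\mathrm{vle},i}(P,T^j,\mathbf x^j)$; $\mathrm{edef}^j=H^j-n^jf_{\mathrm{hl}}(T^j,\mathbf x^j)$; $\mathrm{xsum}^j=x_C^j-1+\sum_{i=1}^{C-1}x_i^j$; $\mathrm{hold}^j=n^j-f_{\mathrm{holdup}}(L^{j-1})$ ($j=2,\dots,S$); collected as $g_\delta=(\mathrm{aux}^S_\delta,\dots,\mathrm{aux}^1_\delta,\mathbf{ydef}^1,\dots,\mathbf{ydef}^S,\mathrm{edef}^1,\dots,\mathrm{edef}^S,\mathrm{xsum}^1,\dots,\mathrm{xsum}^S,\mathrm{hold}^2,\dots,\mathrm{hold}^S)$ with $\mathbf{ydef}^j=(\mathrm{ydef}^j_1,\dots,\mathrm{ydef}^j_C)$. Differential variables $\xi=(n^1,\dots,n^S,\hat{\mathbf x}^1,\dots,\hat{\mathbf x}^S,H^1,\dots,H^S)$, $\hat{\mathbf x}^j=(x_1^j,\dots,x_{C-1}^j)$; algebraic variables $\eta=(V^S,\dots,V^1,\mathbf y^1,\dots,\mathbf y^S,T^1,\dots,T^S,x_C^1,\dots,x_C^S,L^1,\dots,L^{S-1})$. $D_\eta g_0$ is the Jacobian of $g_0$ with respect to $\eta$ (with $\xi$ and the controls held fixed). *)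

theory Defs
  imports "HOL-Analysis.Function_Topology" "HOL-Analysis.Derivative" "Jordan_Normal_Form.Determinant"
begin

text \<open>Vectors of R^C are modelled as functions nat => real whose entries
  1..C are relevant; rv C x zeroes all other entries.\<close>
definition rv :: "nat \<Rightarrow> (nat \<Rightarrow> real) \<Rightarrow> nat \<Rightarrow> real" where
  "rv C x = (\<lambda>i. if 1 \<le> i \<and> i \<le> C then x i else 0)"

text \<open>Continuously differentiable function of the m real variables z 0, ..., z (m-1):
  it depends only on these coordinates and has continuous partial derivatives
  (continuity w.r.t. the product topology, equivalently on R^m).\<close>
definition C1_fin :: "nat \<Rightarrow> ((nat \<Rightarrow> real) \<Rightarrow> real) \<Rightarrow> bool" where
  "C1_fin m F \<longleftrightarrow>
     (\<forall>z w. (\<forall>i<m. z i = w i) \<longrightarrow> F z = F w) \<and>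
     (\<forall>k<m. \<exists>D. (\<forall>z. ((\<lambda>s. F (z(k := s))) has_real_derivative D z) (at (z k)))
                 \<and> continuous_on UNIV D)"

definition C1_real :: "(real \<Rightarrow> real) \<Rightarrow> bool" where
  "C1_real f \<longleftrightarrow> (\<exists>D. (\<forall>x. (f has_real_derivative D x) (at x)) \<and> continuous_on UNIV D)"

definition C1_on :: "real set \<Rightarrow> (real \<Rightarrow> real) \<Rightarrow> bool" where
  "C1_on I f \<longleftrightarrow> (\<exists>D. (\<forall>t\<in>I. (f has_real_derivative D t) (at t within I)) \<and> continuous_on I D)"

text \<open>Dimension of eta (= number of algebraic equations): S*C + 4*S - 1.\<close>
definition dimEta :: "nat \<Rightarrow> nat \<Rightarrow> nat" where
  "dimEta S C = S * C + 4 * S - 1"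

text \<open>Flattening of eta = (V^S..V^1, y^1..y^S, T^1..T^S, x_C^1..x_C^S, L^1..L^(S-1)).\<close>
definition eta_flat :: "nat \<Rightarrow> nat \<Rightarrow> (nat \<Rightarrow> real) \<Rightarrow> (nat \<Rightarrow> nat \<Rightarrow> real) \<Rightarrow>
    (nat \<Rightarrow> real) \<Rightarrow> (nat \<Rightarrow> real) \<Rightarrow> (nat \<Rightarrow> real) \<Rightarrow> nat \<Rightarrow> real" where
  "eta_flat S C V y T xC L l =
     (if l < S then V (S - l)
      else if l < S + S*C then y ((l - S) div C + 1) ((l - S) mod C + 1)
      else if l < S + S*C + S then T (l - (S + S*C) + 1)
      else if l < S + S*C + 2*S then xC (l - (S + S*C + S) + 1)
      else L (l - (S + S*C + 2*S) + 1))"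

text \<open>The k-th component of g_0 (delta = 0), as a function of the flat eta vector e,
  with the differential variables n, H, x_i (i < C) and controls eps, P fixed.
  Ordering: aux^S..aux^1, ydef^1..ydef^S, edef^1..edef^S, xsum^1..xsum^S, hold^2..hold^S.\<close>
definition g0_flat :: "nat \<Rightarrow> nat \<Rightarrow> (nat \<Rightarrow> real \<Rightarrow> real \<Rightarrow> (nat \<Rightarrow> real) \<Rightarrow> real) \<Rightarrow>
    (real \<Rightarrow> (nat \<Rightarrow> real) \<Rightarrow> real) \<Rightarrow> (real \<Rightarrow> real) \<Rightarrow> real \<Rightarrow> real \<Rightarrow>
    (nat \<Rightarrow> real) \<Rightarrow> (nat \<Rightarrow> real) \<Rightarrow> (nat \<Rightarrow> nat \<Rightarrow> real) \<Rightarrow> (nat \<Rightarrow> real) \<Rightarrow> nat \<Rightarrow> real" where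
  "g0_flat S C fvle fhl fhold eps P n H xh e k =
    (let V = (\<lambda>j. e (S - j));
         y = (\<lambda>j i. e (S + (j - 1) * C + (i - 1)));
         T = (\<lambda>j. e (S + S*C + (j - 1)));
         xC = (\<lambda>j. e (S + S*C + S + (j - 1)));
         L = (\<lambda>j. e (S + S*C + 2*S + (j - 1)));
         x = (\<lambda>j i. if i = C then xC j else xh j i);
         aux = (\<lambda>j.
           if j = 1 then
             (\<Sum>i=1..C. L 1 * (x 2 i - x 1 i) - V 1 * (y 1 i - x 1 i)) / n 1
           else if j = S then
             (\<Sum>i=1..C. eps * V S * (x S i - y S i) + V (S - 1) * (y (S - 1) i - x S i)) / n S
           else
             (\<Sum>i=1..C. L j * (x (j + 1) i - x j i) - V j * (y j i - x j i)
                        + V (j - 1) * (y (j - 1) i - x j i)) / n j)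
     in if k < S then aux (S - k)
        else if k < S + S*C then
          (let j = (k - S) div C + 1; i = (k - S) mod C + 1
           in y j i - fvle i P (T j) (rv C (x j)))
        else if k < S + S*C + S then
          (let j = k - (S + S*C) + 1 in H j - n j * fhl (T j) (rv C (x j)))
        else if k < S + S*C + 2*S then
          (let j = k - (S + S*C + S) + 1 in xC j - 1 + (\<Sum>i=1..C-1. x j i))
        else
          (let j = k - (S + S*C + 2*S) + 2 in n j - fhold (L (j - 1))))"

definition jac_g0 :: "nat \<Rightarrow> nat \<Rightarrow> (nat \<Rightarrow> real \<Rightarrow> real \<Rightarrow> (nat \<Rightarrow> real) \<Rightarrow> real) \<Rightarrow>
    (real \<Rightarrow> (nat \<Rightarrow> real) \<Rightarrow> real) \<Rightarrow> (real \<Rightarrow> real) \<Rightarrow> real \<Rightarrow> real \<Rightarrow>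
    (nat \<Rightarrow> real) \<Rightarrow> (nat \<Rightarrow> real) \<Rightarrow> (nat \<Rightarrow> nat \<Rightarrow> real) \<Rightarrow> (nat \<Rightarrow> real) \<Rightarrow> real mat" where
  "jac_g0 S C fvle fhl fhold eps P n H xh e =
     mat (dimEta S C) (dimEta S C)
       (\<lambda>(k, l). deriv (\<lambda>s. g0_flat S C fvle fhl fhold eps P n H xh (e(l := s)) k) (e l))"

end

theory Submission
  imports Defs
begin

text \<open>The first coordinate of the flat vector \<eta> is V^S, and it enters g_0 only through aux^S,
  whose partial derivative in V^S is \<epsilon> (\<Sigma>_i x_i^S - \<Sigma>_i y_i^S) / n^S. On a solution, xsum gives
  \<Sigma>_i x_i^j = 1 for every stage, and then aux^j = 0 says
  V^(j-1) (\<Sigma>_i y_i^(j-1) - 1) = V^j (\<Sigma>_i y_i^j - 1), with \<epsilon> V^S in place of V^S for j = S and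
  a vanishing left side for j = 1. As \<epsilon> and all V^j are nonzero, this forces \<Sigma>_i y_i^j = 1
  stage by stage, so the V^S-column of D_\<eta> g_0 is zero.\<close>

lemma det_zero_col:
  fixes A :: "'a::comm_ring_1 mat"
  assumes A: "A \<in> carrier_mat n n" and c: "c < n" and zero: "\<And>i. i < n \<Longrightarrow> A $$ (i, c) = 0"
  shows "det A = 0"
proof -
  have "(\<Prod>j<n. A $$ (p j, j)) = 0" if "p permutes {0..<n}" for p
    using c zero[of "p c"] permutes_in_image[OF that, of c] by (intro prod_zero) auto
  then show ?thesis by (simp add: det_col[OF A])
qed

lemma top_vapour_sum_eq_one:
  fixes x y :: "nat \<Rightarrow> nat \<Rightarrow> real" and V L :: "nat \<Rightarrow> real" and eps :: real
  assumes S: "2 \<le> S"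
    and xsum: "\<And>j. 1 \<le> j \<Longrightarrow> j \<le> S \<Longrightarrow> (\<Sum>i=1..C. x j i) = 1"
    and aux_first: "(\<Sum>i=1..C. L 1 * (x 2 i - x 1 i) - V 1 * (y 1 i - x 1 i)) = 0"
    and aux_middle: "\<And>j. 2 \<le> j \<Longrightarrow> j < S \<Longrightarrow>
      (\<Sum>i=1..C. L j * (x (j + 1) i - x j i) - V j * (y j i - x j i) + V (j - 1) * (y (j - 1) i - x j i)) = 0"
    and aux_last: "(\<Sum>i=1..C. eps * V S * (x S i - y S i) + V (S - 1) * (y (S - 1) i - x S i)) = 0"
    and eps: "eps \<noteq> 0" and V: "\<And>j. 1 \<le> j \<Longrightarrow> j \<le> S \<Longrightarrow> V j \<noteq> 0"
  shows "(\<Sum>i=1..C. y S i) = 1"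
proof -
  let ?Y = "\<lambda>j. \<Sum>i=1..C. y j i"
  note linear = sum.distrib sum_subtractf right_diff_distrib distrib_left sum_distrib_left[symmetric]
  have below_top: "j < S \<longrightarrow> ?Y j = 1" if "1 \<le> j" for j
    using that
  proof (induction j rule: nat_induct_at_least)
    case base
    have "V 1 * (?Y 1 - 1) = 0"
      using aux_first xsum[of 1] xsum[of 2] S by (simp add: linear)
    then show ?case using V[of 1] S by simp
  next
    case (Suc j)
    have "V (Suc j) * (?Y (Suc j) - 1) = V j * (?Y j - 1)" if "Suc j < S"
      using aux_middle[of "Suc j"] xsum[of j] xsum[of "Suc j"] xsum[of "Suc (Suc j)"] Suc.hyps that
      by (simp add: linear)
    then show ?case using Suc V[of "Suc j"] by simp
  qed
  have "eps * V S * (1 - ?Y S) = 0"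
    using aux_last xsum[of S] below_top[of "S - 1"] S by (simp add: linear)
  then show ?thesis using eps V[of S] S by simp
qed

lemma eta_flat_V: "1 \<le> j \<Longrightarrow> j \<le> S \<Longrightarrow> eta_flat S C V y T xC L (S - j) = V j"
  by (simp add: eta_flat_def)

lemma eta_flat_y:
  assumes "1 \<le> j" "j \<le> S" "i \<in> {1..C}"
  shows "eta_flat S C V y T xC L (S + (j - 1) * C + (i - 1)) = y j i"
proof -
  obtain j' where j: "j = Suc j'" using assms(1) by (cases j) auto
  obtain i' where i: "i = Suc i'" using assms(3) by (cases i) auto
  have "i' < C" "j' < S" using assms i j by auto
  moreover from \<open>i' < C\<close> have "(j' * C + i') div C = j'" "(j' * C + i') mod C = i'"
    by simp_all
  moreover have "j' * C + i' < S * C"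
  proof -
    have "j' * C + i' < Suc j' * C" using \<open>i' < C\<close> by simp
    also have "\<dots> \<le> S * C" using \<open>j' < S\<close> by (intro mult_le_mono1) simp
    finally show ?thesis .
  qed
  ultimately show ?thesis
    by (simp add: eta_flat_def i j add.assoc)
qed

lemma eta_flat_xC: "1 \<le> j \<Longrightarrow> j \<le> S \<Longrightarrow> eta_flat S C V y T xC L (S + S*C + S + (j - 1)) = xC j"
  by (cases j) (auto simp: eta_flat_def)

lemma eta_flat_L: "1 \<le> j \<Longrightarrow> eta_flat S C V y T xC L (S + S*C + 2*S + (j - 1)) = L j"
  by (cases j) (auto simp: eta_flat_def)

lemma eta_flat_upd_VS:
  "0 < S \<Longrightarrow> (eta_flat S C V y T xC L)(0 := s) = eta_flat S C (V(S := s)) y T xC L"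
  by (auto simp: eta_flat_def fun_eq_iff)

text \<open>The index expressions above are literally those obtained by unfolding \<^const>\<open>g0_flat\<close>; below they are
  rewritten with \<open>simp only\<close> before the simplifier normalises the arithmetic and destroys them.\<close>
lemmas eta_flat_components = eta_flat_V eta_flat_y eta_flat_xC eta_flat_L

lemma g0_flat_xsum:
  assumes "1 \<le> j" "j \<le> S" "1 \<le> C"
  shows "g0_flat S C fvle fhl fhold eps P n H xh (eta_flat S C V y T (\<lambda>j. xh j C) L) (S + S*C + S + (j - 1))
    = (\<Sum>i=1..C. xh j i) - 1"
proof -
  have "(\<Sum>i=1..C. xh j i) = (\<Sum>i=1..C-1. xh j i) + xh j C"
    using assms(3) by (cases C) (simp_all add: sum.cl_ivl_Suc)
  moreover have "(if i = C then xh j C else xh j i) = xh j i" for i by simp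
  moreover obtain m where "j = Suc m" using assms(1) by (cases j) auto
  ultimately show ?thesis
    using assms unfolding g0_flat_def Let_def
    by (simp only: eta_flat_xC) (simp cong: if_cong)
qed

lemma g0_flat_aux_first:
  assumes "2 \<le> S"
  shows "g0_flat S C fvle fhl fhold eps P n H xh (eta_flat S C V y T (\<lambda>j. xh j C) L) (S - 1)
    = (\<Sum>i=1..C. L 1 * (xh 2 i - xh 1 i) - V 1 * (y 1 i - xh 1 i)) / n 1"
proof -
  have "(if i = C then xh j C else xh j i) = xh j i" for i j by simp
  then show ?thesis
    using assms unfolding g0_flat_def Let_def
    by (simp only: eta_flat_components cong: sum.cong) simp
qed

lemma g0_flat_aux_middle:
  assumes "2 \<le> j" "j < S"
  shows "g0_flat S C fvle fhl fhold eps P n H xh (eta_flat S C V y T (\<lambda>j. xh j C) L) (S - j)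
    = (\<Sum>i=1..C. L j * (xh (j + 1) i - xh j i) - V j * (y j i - xh j i)
                 + V (j - 1) * (y (j - 1) i - xh j i)) / n j"
proof -
  have "(if i = C then xh j C else xh j i) = xh j i" for i j by simp
  moreover have "S - (S - j) = j" using assms by simp
  ultimately show ?thesis
    using assms unfolding g0_flat_def Let_def
    by (simp only: eta_flat_components cong: sum.cong) simp
qed

lemma g0_flat_aux_last:
  assumes "2 \<le> S"
  shows "g0_flat S C fvle fhl fhold eps P n H xh (eta_flat S C V y T (\<lambda>j. xh j C) L) 0
    = (\<Sum>i=1..C. eps * V S * (xh S i - y S i) + V (S - 1) * (y (S - 1) i - xh S i)) / n S"
proof -
  have "(if i = C then xh j C else xh j i) = xh j i" for i j by simp
  then show ?thesis
    using assms unfolding g0_flat_def Let_def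
    by (simp only: eta_flat_components cong: sum.cong) simp
qed

lemma g0_flat_indep_VS:
  assumes "2 \<le> S" "0 < k"
  shows "g0_flat S C fvle fhl fhold eps P n H xh (e(0 := s)) k = g0_flat S C fvle fhl fhold eps P n H xh e k"
  using assms by (auto simp: g0_flat_def Let_def intro!: sum.cong)

lemma g0_flat_zero_imp_top_sums_eq:
  assumes S: "2 \<le> S" and C: "1 \<le> C"
    and g0: "\<forall>k<dimEta S C. g0_flat S C fvle fhl fhold eps P n H xh (eta_flat S C V y T (\<lambda>j. xh j C) L) k = 0"
    and eps: "eps \<noteq> 0" and n: "\<forall>j\<in>{1..S}. n j \<noteq> 0" and V: "\<forall>j\<in>{1..S}. V j \<noteq> 0"
  shows "(\<Sum>i=1..C. xh S i) = (\<Sum>i=1..C. y S i)"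
proof -
  let ?g = "g0_flat S C fvle fhl fhold eps P n H xh (eta_flat S C V y T (\<lambda>j. xh j C) L)"
  have g: "?g k = 0" if "k < S * C + 4 * S - 1" for k
    using g0 that by (simp add: dimEta_def)
  have xsum: "(\<Sum>i=1..C. xh j i) = 1" if "1 \<le> j" "j \<le> S" for j
    using g[of "S + S*C + S + (j - 1)"] g0_flat_xsum[OF that C] that by simp
  have aux_first: "(\<Sum>i=1..C. L 1 * (xh 2 i - xh 1 i) - V 1 * (y 1 i - xh 1 i)) = 0"
    using g[of "S - 1"] g0_flat_aux_first[OF S] n S by simp
  have aux_middle: "(\<Sum>i=1..C. L j * (xh (j + 1) i - xh j i) - V j * (y j i - xh j i)
      + V (j - 1) * (y (j - 1) i - xh j i)) = 0" if "2 \<le> j" "j < S" for j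
    using g[of "S - j"] g0_flat_aux_middle[OF that] n that by simp
  have aux_last: "(\<Sum>i=1..C. eps * V S * (xh S i - y S i) + V (S - 1) * (y (S - 1) i - xh S i)) = 0"
    using g[of 0] g0_flat_aux_last[OF S] n S by simp
  have "(\<Sum>i=1..C. y S i) = 1"
    using top_vapour_sum_eq_one[OF S xsum aux_first aux_middle aux_last eps] V by simp
  with xsum[of S] S show ?thesis by simp
qed

lemma jac_g0_col_VS_eq_0:
  assumes S: "2 \<le> S" and C: "1 \<le> C" and k: "k < dimEta S C"
    and balanced: "(\<Sum>i=1..C. xh S i) = (\<Sum>i=1..C. y S i)"
  shows "jac_g0 S C fvle fhl fhold eps P n H xh (eta_flat S C V y T (\<lambda>j. xh j C) L) $$ (k, 0) = 0"
proof -
  let ?e = "eta_flat S C V y T (\<lambda>j. xh j C) L"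
  let ?g = "\<lambda>s. g0_flat S C fvle fhl fhold eps P n H xh (?e(0 := s)) k"
  have "\<exists>c. \<forall>s. ?g s = c"
  proof (cases "k = 0")
    case True
    have "?g s = (\<Sum>i=1..C. V (S - 1) * (y (S - 1) i - xh S i)) / n S" for s
    proof -
      have "?g s = (\<Sum>i=1..C. eps * s * (xh S i - y S i) + V (S - 1) * (y (S - 1) i - xh S i)) / n S"
        using g0_flat_aux_last[OF S, of C fvle fhl fhold eps P n H xh "V(S := s)"] S True
        by (simp add: eta_flat_upd_VS)
      then show ?thesis
        using balanced by (simp add: sum.distrib sum_subtractf flip: sum_distrib_left)
    qed
    then show ?thesis by blast
  next
    case False
    then show ?thesis using g0_flat_indep_VS[OF S] by auto
  qed
  then have "deriv ?g (?e 0) = 0" by fastforce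
  then show ?thesis using k by (simp add: jac_g0_def)
qed

lemma det_jac_g0_eq_0:
  assumes S: "2 \<le> S" and C: "1 \<le> C" and balanced: "(\<Sum>i=1..C. xh S i) = (\<Sum>i=1..C. y S i)"
  shows "det (jac_g0 S C fvle fhl fhold eps P n H xh (eta_flat S C V y T (\<lambda>j. xh j C) L)) = 0"
proof (rule det_zero_col)
  show "jac_g0 S C fvle fhl fhold eps P n H xh (eta_flat S C V y T (\<lambda>j. xh j C) L)
    \<in> carrier_mat (dimEta S C) (dimEta S C)"
    by (simp add: jac_g0_def)
  show "0 < dimEta S C" using S by (simp add: dimEta_def)
qed (rule jac_g0_col_VS_eq_0[where xh = xh and y = y, OF S C _ balanced])

theorem mainTheorem5:
  fixes S C :: nat and I :: "real set"
    and fvle :: "nat \<Rightarrow> real \<Rightarrow> real \<Rightarrow> (nat \<Rightarrow> real) \<Rightarrow> real"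
    and fhl fhv :: "real \<Rightarrow> (nat \<Rightarrow> real) \<Rightarrow> real"
    and fhold :: "real \<Rightarrow> real"
    and eps P Q Tc :: "real \<Rightarrow> real"
    and n H T V L :: "nat \<Rightarrow> real \<Rightarrow> real"
    and x y :: "nat \<Rightarrow> nat \<Rightarrow> real \<Rightarrow> real"
  assumes S2: "S \<ge> 2" and C2: "C \<ge> 2" and I_int: "is_interval I"
    and fvle_C1: "\<forall>i\<in>{1..C}. C1_fin (C + 2) (\<lambda>z. fvle i (z 0) (z 1) (rv C (\<lambda>k. z (k + 1))))"
    and fhl_C1: "C1_fin (C + 1) (\<lambda>z. fhl (z 0) (rv C z))"
    and fhv_C1: "C1_fin (C + 1) (\<lambda>z. fhv (z 0) (rv C z))"
    and fhold_C1: "C1_real fhold"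
    and ctrl_C1: "C1_on I eps" "C1_on I P" "C1_on I Q" "C1_on I Tc"
    and state_C1: "\<forall>j\<in>{1..S}. C1_on I (n j) \<and> C1_on I (H j) \<and> C1_on I (T j) \<and> C1_on I (V j)"
      "\<forall>j\<in>{1..S}. \<forall>i\<in>{1..C}. C1_on I (x j i) \<and> C1_on I (y j i)"
      "\<forall>j\<in>{1..S-1}. C1_on I (L j)"
    and TM: "\<forall>t\<in>I. (n 1 has_real_derivative (L 1 t - V 1 t)) (at t within I)"
      "\<forall>j\<in>{2..S-1}. \<forall>t\<in>I. (n j has_real_derivative
          (L j t - V j t - L (j - 1) t + V (j - 1) t)) (at t within I)"
      "\<forall>t\<in>I. (n S has_real_derivative
          (- eps t * V S t - L (S - 1) t + V (S - 1) t)) (at t within I)"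
    and CM: "\<forall>i\<in>{1..C-1}. \<forall>t\<in>I. (x 1 i has_real_derivative
          ((L 1 t * (x 2 i t - x 1 i t) - V 1 t * (y 1 i t - x 1 i t)) / n 1 t)) (at t within I)"
      "\<forall>j\<in>{2..S-1}. \<forall>i\<in>{1..C-1}. \<forall>t\<in>I. (x j i has_real_derivative
          ((L j t * (x (j + 1) i t - x j i t) - V j t * (y j i t - x j i t)
            + V (j - 1) t * (y (j - 1) i t - x j i t)) / n j t)) (at t within I)"
      "\<forall>i\<in>{1..C-1}. \<forall>t\<in>I. (x S i has_real_derivative
          ((eps t * V S t * (x S i t - y S i t) + V (S - 1) t * (y (S - 1) i t - x S i t)) / n S t))
          (at t within I)"
    and EB: "\<forall>t\<in>I. (H 1 has_real_derivative
          (L 1 t * fhl (T 2 t) (rv C (\<lambda>i. x 2 i t)) - V 1 t * fhv (T 1 t) (rv C (\<lambda>i. y 1 i t)) + Q t))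
          (at t within I)"
      "\<forall>j\<in>{2..S-1}. \<forall>t\<in>I. (H j has_real_derivative
          (L j t * fhl (T (j + 1) t) (rv C (\<lambda>i. x (j + 1) i t))
           - V j t * fhv (T j t) (rv C (\<lambda>i. y j i t))
           - L (j - 1) t * fhl (T j t) (rv C (\<lambda>i. x j i t))
           + V (j - 1) t * fhv (T (j - 1) t) (rv C (\<lambda>i. y (j - 1) i t)))) (at t within I)"
      "\<forall>t\<in>I. (H S has_real_derivative
          ((1 - eps t) * V S t * fhl (Tc t) (rv C (\<lambda>i. y S i t))
           - V S t * fhv (T S t) (rv C (\<lambda>i. y S i t))
           - L (S - 1) t * fhl (T S t) (rv C (\<lambda>i. x S i t))
           + V (S - 1) t * fhv (T (S - 1) t) (rv C (\<lambda>i. y (S - 1) i t)))) (at t within I)"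
    and ALG: "\<forall>t\<in>I. \<forall>k<dimEta S C.
          g0_flat S C fvle fhl fhold (eps t) (P t) (\<lambda>j. n j t) (\<lambda>j. H j t) (\<lambda>j i. x j i t)
            (eta_flat S C (\<lambda>j. V j t) (\<lambda>j i. y j i t) (\<lambda>j. T j t) (\<lambda>j. x j C t) (\<lambda>j. L j t)) k = 0"
    and eps_nz: "\<forall>t\<in>I. eps t \<noteq> 0"
    and n_nz: "\<forall>j\<in>{1..S}. \<forall>t\<in>I. n j t \<noteq> 0"
    and V_nz: "\<forall>j\<in>{1..S}. \<forall>t\<in>I. V j t \<noteq> 0"
  shows "\<forall>t\<in>I. det (jac_g0 S C fvle fhl fhold (eps t) (P t) (\<lambda>j. n j t) (\<lambda>j. H j t) (\<lambda>j i. x j i t)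
            (eta_flat S C (\<lambda>j. V j t) (\<lambda>j i. y j i t) (\<lambda>j. T j t) (\<lambda>j. x j C t) (\<lambda>j. L j t))) = 0"
proof
  fix t assume "t \<in> I"
  then have balanced: "(\<Sum>i=1..C. x S i t) = (\<Sum>i=1..C. y S i t)"
    using g0_flat_zero_imp_top_sums_eq[of S C fvle fhl fhold "eps t" "P t" "\<lambda>j. n j t" "\<lambda>j. H j t"
        "\<lambda>j i. x j i t" "\<lambda>j. V j t" "\<lambda>j i. y j i t" "\<lambda>j. T j t" "\<lambda>j. L j t"]
      S2 C2 ALG eps_nz n_nz V_nz
    by simp
  show "det (jac_g0 S C fvle fhl fhold (eps t) (P t) (\<lambda>j. n j t) (\<lambda>j. H j t) (\<lambda>j i. x j i t)
      (eta_flat S C (\<lambda>j. V j t) (\<lambda>j i. y j i t) (\<lambda>j. T j t) (\<lambda>j. x j C t) (\<lambda>j. L j t))) = 0"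
    using det_jac_g0_eq_0[of S C "\<lambda>j i. x j i t" "\<lambda>j i. y j i t"] S2 C2 balanced by simp
qed

end
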